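(* Let $f(x)=\sum_{n=0}^\infty \frac{a_n}{n!}x^n$ be given by a power series, and let $x>0$. Assuming that $\ln\partial_x$ (defined in the context below) commutes with the summation, i.e. $(\ln\partial_x) f(x) = \sum_{n=0}^\infty \frac{a_n}{n!}(\ln\partial_x)x^n$, one has $$(\ln\partial_x)\, f(x) = -(\gamma+\ln x)\, f(x) + \sum_{n=0}^\infty \frac{a_n}{n!}\, h_n\, x^n,$$ where $\gamma$ is the Euler–Mascheroni constant and $h_n=\sum_{k=1}^n\frac1k$ (with $h_0=0$).
   Context: For real $\nu$, $x>0$ and $\mu\ge 0$, the fractional derivative of a power is defined by $\partial_x^\nu x^\mu = \frac{\Gamma(\mu+1)}{\Gamma(\mu-\nu+1)}\,x^{\mu-\nu}$. The logarithm of the derivative operator is defined on powers by $(\ln\partial_x)\,x^\mu := \lim_{\nu\to 0}\frac{\partial_x^\nu x^\mu - x^\mu}{\nu}$. *)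

theory Defs
  imports "HOL-Analysis.Analysis"
begin

definition frac_deriv_pow :: "real \<Rightarrow> real \<Rightarrow> real \<Rightarrow> real" where
  "frac_deriv_pow \<nu> \<mu> x = Gamma (\<mu> + 1) / Gamma (\<mu> - \<nu> + 1) * x powr (\<mu> - \<nu>)"

definition ln_deriv_pow :: "real \<Rightarrow> real \<Rightarrow> real" where
  "ln_deriv_pow \<mu> x = Lim (at 0) (\<lambda>\<nu>. (frac_deriv_pow \<nu> \<mu> x - x powr \<mu>) / \<nu>)"

end

theory Submission
  imports Defs
begin

text \<open>The fractional derivative of order 0 is the identity, so (ln d/dx) x^mu is the
  derivative at nu = 0 of nu |-> Gamma(mu+1) x^(mu-nu) / Gamma(mu-nu+1), namely
  (psi(mu+1) - ln x) x^mu with psi the digamma function. For mu = n one has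
  psi(n+1) = h_n - gamma, and the theorem follows by summing termwise.\<close>

lemma frac_deriv_pow_eq_rGamma:
  "frac_deriv_pow \<nu> \<mu> x = Gamma (\<mu> + 1) * rGamma (\<mu> - \<nu> + 1) * x powr (\<mu> - \<nu>)"
  by (simp add: frac_deriv_pow_def rGamma_inverse_Gamma divide_inverse)

lemma frac_deriv_pow_0:
  assumes "\<mu> + 1 \<notin> \<int>\<^sub>\<le>\<^sub>0"
  shows "frac_deriv_pow 0 \<mu> x = x powr \<mu>"
  using Gamma_nonzero[OF assms] by (simp add: frac_deriv_pow_def)

lemma has_field_derivative_frac_deriv_pow_0:
  assumes "x > 0" and "\<mu> + 1 \<notin> \<int>\<^sub>\<le>\<^sub>0"
  shows "((\<lambda>\<nu>. frac_deriv_pow \<nu> \<mu> x) has_field_derivative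
           (Digamma (\<mu> + 1) - ln x) * x powr \<mu>) (at 0)"
proof -
  have rGamma: "((\<lambda>\<nu>. rGamma (\<mu> - \<nu> + 1)) has_field_derivative
                  (- rGamma (\<mu> + 1) * Digamma (\<mu> + 1)) * (- 1)) (at 0)"
  proof (rule DERIV_chain2[of rGamma _ "\<lambda>\<nu>. \<mu> - \<nu> + 1"])
    show "(rGamma has_field_derivative - rGamma (\<mu> + 1) * Digamma (\<mu> + 1)) (at (\<mu> - 0 + 1))"
      using has_field_derivative_rGamma_no_nonpos_int[OF assms(2)] by simp
  qed (auto intro!: derivative_eq_intros)
  have powr: "((\<lambda>\<nu>. x powr (\<mu> - \<nu>)) has_field_derivative - ln x * x powr \<mu>) (at 0)"
    using assms(1) by (auto intro!: derivative_eq_intros)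
  have inverse: "Gamma (\<mu> + 1) * rGamma (\<mu> + 1) = 1"
    using Gamma_nonzero[OF assms(2)] by (simp add: rGamma_inverse_Gamma)
  have "((\<lambda>\<nu>. Gamma (\<mu> + 1) * (rGamma (\<mu> - \<nu> + 1) * x powr (\<mu> - \<nu>))) has_field_derivative
          (Gamma (\<mu> + 1) * rGamma (\<mu> + 1)) * ((Digamma (\<mu> + 1) - ln x) * x powr \<mu>)) (at 0)"
    by (rule DERIV_cmult[OF DERIV_mult[OF rGamma powr], THEN DERIV_cong])
       (simp add: algebra_simps)
  then show ?thesis
    by (simp add: frac_deriv_pow_eq_rGamma mult.assoc inverse)
qed

lemma ln_deriv_pow_eq_Digamma:
  assumes "x > 0" and "\<mu> + 1 \<notin> \<int>\<^sub>\<le>\<^sub>0"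
  shows "ln_deriv_pow \<mu> x = (Digamma (\<mu> + 1) - ln x) * x powr \<mu>"
proof -
  have "((\<lambda>\<nu>. (frac_deriv_pow \<nu> \<mu> x - x powr \<mu>) / \<nu>) \<longlongrightarrow>
          (Digamma (\<mu> + 1) - ln x) * x powr \<mu>) (at 0)"
    using has_field_derivative_frac_deriv_pow_0[OF assms]
    by (simp add: has_field_derivative_iff frac_deriv_pow_0[OF assms(2)])
  then show ?thesis
    unfolding ln_deriv_pow_def by (intro tendsto_Lim) simp_all
qed

lemma ln_deriv_pow_of_nat:
  assumes "x > 0"
  shows "ln_deriv_pow (real n) x = (harm n - euler_mascheroni - ln x) * x ^ n"
proof -
  have "real n + 1 \<notin> \<int>\<^sub>\<le>\<^sub>0"
    using nonpos_Ints_nonpos by fastforce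
  moreover have "Digamma (real n + 1) = harm n - euler_mascheroni"
    using Digamma_of_nat[where 'a = real, of n] by (simp add: add.commute)
  ultimately show ?thesis
    using assms by (simp add: ln_deriv_pow_eq_Digamma powr_realpow)
qed

theorem mainTheorem3:
  fixes a :: "nat \<Rightarrow> real" and f :: "real \<Rightarrow> real" and x L :: real
  assumes "x > 0"
    and "(\<lambda>n. a n / fact n * x ^ n) sums f x"
    and "(\<lambda>n. a n / fact n * ln_deriv_pow (real n) x) sums L"
  shows "L = - (euler_mascheroni + ln x) * f x + (\<Sum>n. a n / fact n * harm n * x ^ n)"
proof -
  let ?c = "euler_mascheroni + ln x"
  have "a n / fact n * harm n * x ^ n
          = a n / fact n * ln_deriv_pow (real n) x + ?c * (a n / fact n * x ^ n)" for n
    by (simp add: ln_deriv_pow_of_nat[OF assms(1)] algebra_simps add_divide_distrib)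
  moreover have "(\<lambda>n. a n / fact n * ln_deriv_pow (real n) x + ?c * (a n / fact n * x ^ n))
                   sums (L + ?c * f x)"
    by (intro sums_add sums_mult assms(2,3))
  ultimately have "(\<lambda>n. a n / fact n * harm n * x ^ n) sums (L + ?c * f x)"
    by simp
  then show ?thesis
    by (simp add: sums_iff algebra_simps)
qed

end
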